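(* Let $f:[0,1]\to[0,1]$ be a surjective continuous function. If $f$ admits a splitting sequence, then there exist a nondegenerate continuum $C\subseteq\varprojlim f$ and a sequence $(C_n)_{n\in\mathbb N}$ of nondegenerate continua $C_n\subseteq\varprojlim f$ with $C_n\neq C$ for all $n$, such that $C_n\to C$ in the Hausdorff metric.
   Context: $\varprojlim f=\{\mathbf x=(x_0,x_1,\dots)\in[0,1]^{\mathbb N}: f(x_{n+1})=x_n\ \forall n\}$ with the topology inherited from the product topology (a compact metric space; the Hausdorff metric is taken with respect to a compatible metric). A sequence $(T_n)_{n\in\mathbb N}$ of closed intervals $T_n\subsetneq[0,1]$ (possibly degenerate) is tight if $f(T_{n+1})=T_n$ for every $n$ and $T_n$ is nondegenerate for all sufficiently large $n$. A tight sequence $(T_n)$, $T_n=[l_n,r_n]$, is a splitting sequence admitted by $f$ if there are an infinite set $N\subseteq\mathbb N$ and nondegenerate closed intervals $S_n\subseteq[0,1]$ ($n\in N$) with $S_n\cap T_n\subseteq\{l_n,r_n\}$ and $f(S_n)=f(T_n)$ for all $n\in N$. *)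

theory Defs
  imports "HOL-Analysis.Analysis"
begin

text \<open>The inverse limit of f on [0,1], as a subset of nat => real, which carries the
product topology (Function_Topology) and a compatible metric (Function_Metric).\<close>
definition inv_lim :: "(real \<Rightarrow> real) \<Rightarrow> (nat \<Rightarrow> real) set" where
  "inv_lim f = {x. (\<forall>n. x n \<in> {0..1}) \<and> (\<forall>n. f (x (Suc n)) = x n)}"

definition tight_seq :: "(real \<Rightarrow> real) \<Rightarrow> (nat \<Rightarrow> real) \<Rightarrow> (nat \<Rightarrow> real) \<Rightarrow> bool" where
  "tight_seq f l r \<longleftrightarrow>
     (\<forall>n. 0 \<le> l n \<and> l n \<le> r n \<and> r n \<le> 1 \<and> {l n..r n} \<noteq> {0..1}) \<and>
     (\<forall>n. f ` {l (Suc n)..r (Suc n)} = {l n..r n}) \<and>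
     (\<exists>N. \<forall>n\<ge>N. l n < r n)"

definition splitting_seq :: "(real \<Rightarrow> real) \<Rightarrow> (nat \<Rightarrow> real) \<Rightarrow> (nat \<Rightarrow> real) \<Rightarrow> bool" where
  "splitting_seq f l r \<longleftrightarrow> tight_seq f l r \<and>
     (\<exists>N :: nat set. infinite N \<and> (\<exists>a b :: nat \<Rightarrow> real. \<forall>n\<in>N.
        0 \<le> a n \<and> a n < b n \<and> b n \<le> 1 \<and>
        {a n..b n} \<inter> {l n..r n} \<subseteq> {l n, r n} \<and>
        f ` {a n..b n} = f ` {l n..r n}))"

definition admits_splitting :: "(real \<Rightarrow> real) \<Rightarrow> bool" where
  "admits_splitting f \<longleftrightarrow> (\<exists>l r. splitting_seq f l r)"

definition continuum :: "'a::topological_space set \<Rightarrow> bool" where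
  "continuum C \<longleftrightarrow> C \<noteq> {} \<and> compact C \<and> connected C"

definition nondegenerate :: "'a set \<Rightarrow> bool" where
  "nondegenerate C \<longleftrightarrow> (\<exists>x\<in>C. \<exists>y\<in>C. x \<noteq> y)"

definition hausdist :: "'a::metric_space set \<Rightarrow> 'a set \<Rightarrow> real" where
  "hausdist S T =
    (if S \<noteq> {} \<and> T \<noteq> {} \<and> bounded S \<and> bounded T
     then max (SUP x\<in>S. infdist x T) (SUP y\<in>T. infdist y S) else 0)"

end

theory Submission
  imports Defs
begin

(*
  The tight sequence T_n = [l n, r n] cuts out the subcontinuum C of those threads x with
  x n in T_n for all n. For infinitely many n the splitting interval S_n satisfies
  f(S_n) = f(T_n) = T_(n-1), so T_0, ..., T_(n-1), S_n, followed by successive preimage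
  intervals of S_n (they exist because f is a continuous surjection of [0,1]), is again a
  chain of intervals. It cuts out a continuum C_n whose threads have exactly the same
  initial segments of length n as those of C, so C_n -> C in the Hausdorff metric of the
  product metric; and C_n differs from C because S_n reaches outside T_n.
  The set cut out by a chain is a continuum since it is the decreasing intersection of the
  sets of points of the product of the intervals satisfying the thread condition below m,
  and each of these is a continuous image of that product.
*)

lemma decseq_compact_subset_open:
  fixes K :: "nat \<Rightarrow> 'a::t2_space set"
  assumes compact: "\<And>n. compact (K n)" and dec: "decseq K"
    and "open W" and Inter_sub: "\<Inter>(range K) \<subseteq> W"
  obtains n where "K n \<subseteq> W"
proof -
  have "K 0 \<inter> (\<Inter>n. K n - W) = {}"
    using Inter_sub by blast
  then obtain F where "finite F" and F: "K 0 \<inter> (\<Inter>i\<in>F. K i - W) = {}"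
    using compact_imp_fip_image[OF compact, of UNIV "\<lambda>n. K n - W"]
    by (meson \<open>open W\<close> closed_Diff compact compact_imp_closed)
  define n where "n = Max (insert 0 F)"
  have "K n \<subseteq> K i" if "i \<in> insert 0 F" for i
    using decseqD[OF dec, of i n] \<open>finite F\<close> that by (simp add: n_def)
  with F have "K n \<subseteq> W"
    by blast
  then show thesis ..
qed

lemma connected_nest_metric:
  fixes K :: "nat \<Rightarrow> 'a::metric_space set"
  assumes compact: "\<And>n. compact (K n)" and connected: "\<And>n. connected (K n)"
    and dec: "decseq K"
  shows "connected (\<Inter>(range K))"
proof -
  have closed: "closed (\<Inter>(range K))"
    using compact compact_imp_closed by blast
  show ?thesis
    unfolding connected_closed_set[OF closed]
  proof (intro notI, elim exE conjE)
    fix A B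
    assume "closed A" "closed B" "A \<noteq> {}" "B \<noteq> {}"
      and AB: "A \<union> B = \<Inter>(range K)" "A \<inter> B = {}"
    obtain U V where "open U" "open V" "A \<subseteq> U" "B \<subseteq> V" "U \<inter> V = {}"
      using metrizable_imp_normal_space[OF metrizable_space_euclidean]
        \<open>closed A\<close> \<open>closed B\<close> \<open>A \<inter> B = {}\<close>
      unfolding normal_space_def by (metis closed_closedin disjnt_def open_openin)
    moreover obtain n where Kn: "K n \<subseteq> U \<union> V"
      using decseq_compact_subset_open[OF compact dec, of "U \<union> V"]
        \<open>open U\<close> \<open>open V\<close> \<open>A \<subseteq> U\<close> \<open>B \<subseteq> V\<close> AB(1) by blast
    moreover have "U \<inter> K n \<noteq> {}" "V \<inter> K n \<noteq> {}"
      using \<open>A \<noteq> {}\<close> \<open>B \<noteq> {}\<close> \<open>A \<subseteq> U\<close> \<open>B \<subseteq> V\<close> AB(1) by blast+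
    ultimately show False
      using connectedD[OF connected \<open>open U\<close> \<open>open V\<close>] by blast
  qed
qed

lemma compact_PiE_UNIV: "(\<And>i. compact (S i)) \<Longrightarrow> compact (PiE UNIV S)"
  using compactin_PiE[of "\<lambda>_. euclidean" UNIV S] by (simp add: euclidean_product_topology)

lemma connected_PiE_UNIV: "(\<And>i. connected (S i)) \<Longrightarrow> connected (PiE UNIV S)"
  using connectedin_PiE[of "\<lambda>_. euclidean" UNIV S] by (simp add: euclidean_product_topology)

lemma continuous_on_funpow:
  assumes "continuous_on S f" and "f ` S \<subseteq> S"
  shows "continuous_on S (f ^^ n)"
proof (induction n)
  case (Suc n)
  then show ?case
    using continuous_on_compose[OF assms(1) continuous_on_subset[OF Suc]] assms(2)
    by (simp add: funpow_Suc_right del: funpow.simps)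
qed (simp add: continuous_on_id)

(* The product metric of Function_Metric weights the coordinate from_nat n by (1/2)^n. *)
lemma dist_fun_less_if_agree:
  fixes e :: real
  assumes "0 < e"
  obtains F :: "'i::countable set" where "finite F"
    and "\<And>x y :: 'i \<Rightarrow> 'a::metric_space. (\<And>k. k \<in> F \<Longrightarrow> x k = y k) \<Longrightarrow> dist x y < e"
proof -
  obtain N where N: "(1/2) ^ N < e"
    using real_arch_pow_inv[OF assms, of "1/2"] by auto
  show thesis
  proof (rule that)
    show "finite (from_nat ` {..N} :: 'i set)"
      by simp
    fix x y :: "'i \<Rightarrow> 'a"
    assume agree: "\<And>k. k \<in> from_nat ` {..N} \<Longrightarrow> x k = y k"
    have "x (from_nat n) = y (from_nat n)" if "n \<le> N" for n
      using agree that by simp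
    then have "{dist (x (from_nat n)) (y (from_nat n)) |n. n \<le> N} = {0}"
      by (auto intro!: exI[of _ 0])
    then show "dist x y < e"
      using dist_fun_le_dist_first_terms[of x y N] N by simp
  qed
qed

lemma hausdist_le:
  fixes S T :: "'a::metric_space set"
  assumes "S \<noteq> {}" "T \<noteq> {}" "bounded S" "bounded T"
    and S_close: "\<And>x. x \<in> S \<Longrightarrow> \<exists>y\<in>T. dist x y \<le> e"
    and T_close: "\<And>y. y \<in> T \<Longrightarrow> \<exists>x\<in>S. dist y x \<le> e"
  shows "0 \<le> hausdist S T" "hausdist S T \<le> e"
proof -
  have infdist_le_if_close: "infdist x B \<le> e" if close: "\<exists>y\<in>B. dist x y \<le> e" for x and B :: "'a set"
  proof -
    obtain y where "y \<in> B" "dist x y \<le> e"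
      using close by blast
    then show ?thesis
      using infdist_le[of y B x] by linarith
  qed
  have S_inf: "infdist x T \<le> e" if "x \<in> S" for x
    using infdist_le_if_close S_close[OF that] .
  have T_inf: "infdist y S \<le> e" if "y \<in> T" for y
    using infdist_le_if_close T_close[OF that] .
  obtain x0 where "x0 \<in> S"
    using \<open>S \<noteq> {}\<close> by blast
  have "0 \<le> infdist x0 T"
    by (rule infdist_nonneg)
  also have "\<dots> \<le> (SUP x\<in>S. infdist x T)"
    using \<open>x0 \<in> S\<close> S_inf by (intro cSUP_upper bdd_aboveI2)
  finally have "0 \<le> (SUP x\<in>S. infdist x T)" .
  moreover have "(SUP x\<in>S. infdist x T) \<le> e"
    using S_inf by (rule cSUP_least[OF \<open>S \<noteq> {}\<close>])
  moreover have "(SUP y\<in>T. infdist y S) \<le> e"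
    using T_inf by (rule cSUP_least[OF \<open>T \<noteq> {}\<close>])
  ultimately show "0 \<le> hausdist S T" "hausdist S T \<le> e"
    using assms(1-4) by (simp_all add: hausdist_def)
qed

lemma hausdist_tendsto_0_if_prefixes_agree:
  fixes C :: "(nat \<Rightarrow> 'a::metric_space) set" and Cs :: "nat \<Rightarrow> (nat \<Rightarrow> 'a) set"
  assumes "C \<noteq> {}" "bounded C" "\<And>j. Cs j \<noteq> {}" "\<And>j. bounded (Cs j)"
    and m: "filterlim m at_top sequentially"
    and to_C: "\<And>j x. x \<in> Cs j \<Longrightarrow> \<exists>y\<in>C. \<forall>k\<le>m j. y k = x k"
    and from_C: "\<And>j y. y \<in> C \<Longrightarrow> \<exists>x\<in>Cs j. \<forall>k\<le>m j. x k = y k"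
  shows "(\<lambda>j. hausdist (Cs j) C) \<longlonglongrightarrow> 0"
proof (rule tendstoI)
  fix e :: real
  assume "0 < e"
  then obtain F :: "nat set" where "finite F"
    and close: "\<And>x y :: nat \<Rightarrow> 'a. (\<And>k. k \<in> F \<Longrightarrow> x k = y k) \<Longrightarrow> dist x y < e / 2"
    using dist_fun_less_if_agree[of "e / 2"] by (metis half_gt_zero)
  have "\<forall>\<^sub>F j in sequentially. Max (insert 0 F) \<le> m j"
    using m by (simp add: filterlim_at_top)
  then show "\<forall>\<^sub>F j in sequentially. dist (hausdist (Cs j) C) 0 < e"
  proof (rule eventually_mono)
    fix j
    assume "Max (insert 0 F) \<le> m j"
    then have F_le: "k \<le> m j" if "k \<in> F" for k
      using Max_ge[of "insert 0 F" k] \<open>finite F\<close> that by simp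
    have "\<exists>y\<in>C. dist x y \<le> e / 2" if x: "x \<in> Cs j" for x
    proof -
      obtain y where "y \<in> C" "\<forall>k\<le>m j. y k = x k"
        using to_C[OF x] by blast
      then show ?thesis
        using close[of x y] F_le by (auto intro: less_imp_le)
    qed
    moreover have "\<exists>x\<in>Cs j. dist y x \<le> e / 2" if y: "y \<in> C" for y
    proof -
      obtain x where "x \<in> Cs j" "\<forall>k\<le>m j. x k = y k"
        using from_C[OF y] by blast
      then show ?thesis
        using close[of y x] F_le by (auto intro: less_imp_le)
    qed
    ultimately have "0 \<le> hausdist (Cs j) C" "hausdist (Cs j) C \<le> e / 2"
      using hausdist_le[of "Cs j" C] assms by blast+
    then show "dist (hausdist (Cs j) C) 0 < e"
      using \<open>0 < e\<close> by simp
  qed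
qed

lemma image_Icc_eq_if_endpoint_values_unique:
  fixes f :: "real \<Rightarrow> real"
  assumes cont: "continuous_on {c..d} f" and "c \<le> d" and "f c \<le> f d"
    and c_unique: "\<And>t. t \<in> {c..d} \<Longrightarrow> f t = f c \<Longrightarrow> t = c"
    and d_unique: "\<And>t. t \<in> {c..d} \<Longrightarrow> f t = f d \<Longrightarrow> t = d"
  shows "f ` {c..d} = {f c..f d}"
proof
  have cont_sub: "continuous_on {s..s'} f" if "c \<le> s" "s' \<le> d" for s s'
    using continuous_on_subset[OF cont] that by auto
  show "f ` {c..d} \<subseteq> {f c..f d}"
  proof
    fix y assume "y \<in> f ` {c..d}"
    then obtain t where t: "t \<in> {c..d}" "y = f t"
      by blast
    have "f t \<le> f d"
    proof (rule ccontr)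
      assume "\<not> f t \<le> f d"
      then obtain s where "c \<le> s" "s \<le> t" "f s = f d"
        using IVT'[of f c "f d" t] cont_sub[of c t] t \<open>f c \<le> f d\<close> by auto
      then have "t = d"
        using d_unique[of s] t by auto
      with \<open>\<not> f t \<le> f d\<close> show False
        by simp
    qed
    moreover have "f c \<le> f t"
    proof (rule ccontr)
      assume "\<not> f c \<le> f t"
      then obtain s where "t \<le> s" "s \<le> d" "f s = f c"
        using IVT'[of f t "f c" d] cont_sub[of t d] t \<open>f c \<le> f d\<close> by auto
      then have "t = c"
        using c_unique[of s] t by auto
      with \<open>\<not> f c \<le> f t\<close> show False
        by simp
    qed
    ultimately show "y \<in> {f c..f d}"
      using t by simp
  qed
  show "{f c..f d} \<subseteq> f ` {c..d}"
    using IVT'[of f c _ d] cont \<open>c \<le> d\<close> by (force simp: image_iff)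
qed

lemma interval_image_lift_ordered:
  fixes f :: "real \<Rightarrow> real"
  assumes cont: "continuous_on {p..q} f" and "p \<le> q" and "f p \<le> f q"
  obtains c d where "p \<le> c" "c \<le> d" "d \<le> q" "f ` {c..d} = {f p..f q}"
proof -
  have compact_fibre: "compact {t \<in> {p..s}. f t = y}" if "s \<le> q" for s y
  proof -
    have "continuous_on {p..s} f"
      using continuous_on_subset[OF cont] that by auto
    then have "closed {t \<in> {p..s}. f t = y}"
      by (rule continuous_closed_preimage_constant) simp
    then show ?thesis
      by (auto simp: compact_eq_bounded_closed intro: bounded_subset[of "{p..s}"])
  qed
  obtain d where d: "d \<in> {p..q}" "f d = f q"
    and d_least: "\<And>t. t \<in> {p..q} \<Longrightarrow> f t = f q \<Longrightarrow> d \<le> t"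
    using compact_attains_inf[OF compact_fibre[of q "f q"]] \<open>p \<le> q\<close> by force
  obtain c where c: "c \<in> {p..d}" "f c = f p"
    and c_greatest: "\<And>t. t \<in> {p..d} \<Longrightarrow> f t = f p \<Longrightarrow> t \<le> c"
    using compact_attains_sup[OF compact_fibre[of d "f p"]] d by force
  have "f ` {c..d} = {f c..f d}"
  proof (rule image_Icc_eq_if_endpoint_values_unique)
    show "continuous_on {c..d} f"
      using continuous_on_subset[OF cont] c d by auto
    show "c \<le> d" "f c \<le> f d"
      using c d \<open>f p \<le> f q\<close> by auto
    show "t = c" if "t \<in> {c..d}" "f t = f c" for t
      using c_greatest[of t] that c by auto
    show "t = d" if "t \<in> {c..d}" "f t = f d" for t
      using d_least[of t] that c d by auto
  qed
  then show thesis
    using that c d by auto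
qed

lemma interval_image_lift:
  fixes f :: "real \<Rightarrow> real"
  assumes cont: "continuous_on {u..v} f"
    and "y \<in> f ` {u..v}" "z \<in> f ` {u..v}" "y \<le> z"
  obtains c d where "u \<le> c" "c \<le> d" "d \<le> v" "f ` {c..d} = {y..z}"
proof -
  obtain p q where pq: "p \<in> {u..v}" "q \<in> {u..v}" "f p = y" "f q = z"
    using assms by blast
  show thesis
  proof (cases "p \<le> q")
    case True
    have "continuous_on {p..q} f"
      using continuous_on_subset[OF cont] pq by auto
    moreover have "f p \<le> f q"
      using pq \<open>y \<le> z\<close> by simp
    ultimately obtain c d where "p \<le> c" "c \<le> d" "d \<le> q" "f ` {c..d} = {f p..f q}"
      using interval_image_lift_ordered True by blast
    then show thesis
      using that[of c d] pq by auto
  next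
    case False
    define g where "g t = f (- t)" for t
    have "continuous_on {-p..-q} g"
      unfolding g_def using pq by (intro continuous_on_compose2[OF cont]) (auto intro!: continuous_intros)
    then obtain c d where cd: "-p \<le> c" "c \<le> d" "d \<le> -q" "g ` {c..d} = {y..z}"
      using interval_image_lift_ordered[of "-p" "-q" g] False pq \<open>y \<le> z\<close> by (auto simp: g_def)
    have "g ` {c..d} = f ` {-d..-c}"
      unfolding g_def image_image[symmetric, of f uminus] by simp
    then show thesis
      using that[of "-d" "-c"] cd pq by auto
  qed
qed

lemma Icc_not_subset_if_meets_at_endpoints:
  fixes s t l r :: real
  assumes "s < t" and meet: "{s..t} \<inter> {l..r} \<subseteq> {l, r}"
  shows "\<not> {s..t} \<subseteq> {l..r}"
proof
  assume "{s..t} \<subseteq> {l..r}"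
  then have endpoints: "{s..t} \<subseteq> {l, r}"
    using meet by blast
  have "s \<in> {s..t}" "(s + t) / 2 \<in> {s..t}" "t \<in> {s..t}"
    using \<open>s < t\<close> by auto
  then have "s \<in> {l, r}" "(s + t) / 2 \<in> {l, r}" "t \<in> {l, r}"
    using endpoints by blast+
  then show False
    using \<open>s < t\<close> by auto
qed

definition interval_chain :: "(real \<Rightarrow> real) \<Rightarrow> (nat \<Rightarrow> real) \<Rightarrow> (nat \<Rightarrow> real) \<Rightarrow> bool" where
  "interval_chain f a b \<longleftrightarrow>
     (\<forall>k. 0 \<le> a k \<and> a k \<le> b k \<and> b k \<le> 1 \<and> f ` {a (Suc k)..b (Suc k)} = {a k..b k})"

lemma interval_chain_bounds: "interval_chain f a b \<Longrightarrow> 0 \<le> a k \<and> a k \<le> b k \<and> b k \<le> 1"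
  by (simp add: interval_chain_def)

lemma interval_chain_image: "interval_chain f a b \<Longrightarrow> f ` {a (Suc k)..b (Suc k)} = {a k..b k}"
  by (simp add: interval_chain_def)

lemma chain_box_subset_unit_box:
  assumes chain: "interval_chain f a b"
  shows "PiE UNIV (\<lambda>k. {a k..b k}) \<subseteq> PiE UNIV (\<lambda>_. {0..1})"
proof
  fix y assume y: "y \<in> PiE UNIV (\<lambda>k. {a k..b k})"
  have "y k \<in> {0..1}" for k
  proof -
    have "y k \<in> {a k..b k}"
      using y by (simp add: PiE_iff)
    then show ?thesis
      using interval_chain_bounds[OF chain, of k] by auto
  qed
  then show "y \<in> PiE UNIV (\<lambda>_. {0..1})"
    by (simp add: PiE_iff)
qed

lemma interval_chain_funpow_image:
  assumes "interval_chain f a b"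
  shows "(f ^^ j) ` {a (k + j)..b (k + j)} = {a k..b k}"
proof (induction j)
  case (Suc j)
  have "(f ^^ Suc j) ` {a (k + Suc j)..b (k + Suc j)} = (f ^^ j) ` f ` {a (Suc (k + j))..b (Suc (k + j))}"
    by (simp add: funpow_Suc_right image_comp del: funpow.simps)
  also have "\<dots> = {a k..b k}"
    using interval_chain_image[OF assms] Suc.IH by simp
  finally show ?case .
qed simp

definition chain_inv_lim :: "(real \<Rightarrow> real) \<Rightarrow> (nat \<Rightarrow> real) \<Rightarrow> (nat \<Rightarrow> real) \<Rightarrow> (nat \<Rightarrow> real) set" where
  "chain_inv_lim f a b = {x. \<forall>k. x k \<in> {a k..b k} \<and> f (x (Suc k)) = x k}"

lemma backward_orbit_eq_funpow:
  assumes "\<And>k. k < m \<Longrightarrow> f (x (Suc k)) = x k" and "k \<le> m"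
  shows "x k = (f ^^ (m - k)) (x m)"
  using \<open>k \<le> m\<close>
proof (induction rule: inc_induct)
  case (step k)
  then have "m - k = Suc (m - Suc k)"
    by simp
  then show ?case
    using step assms(1)[of k] by simp
qed simp

definition pull_back :: "(real \<Rightarrow> real) \<Rightarrow> nat \<Rightarrow> (nat \<Rightarrow> real) \<Rightarrow> nat \<Rightarrow> real" where
  "pull_back f m y k = (f ^^ (m - k)) (y (max k m))"

lemma pull_back_eq: "m \<le> k \<Longrightarrow> pull_back f m y k = y k"
  by (simp add: pull_back_def)

lemma pull_back_step:
  assumes "k < m"
  shows "f (pull_back f m y (Suc k)) = pull_back f m y k"
proof -
  have "m - k = Suc (m - Suc k)"
    using assms by simp
  then show ?thesis
    using assms by (simp add: pull_back_def max_def)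
qed

lemma pull_back_in_chain:
  assumes "interval_chain f a b" and "\<And>k. y k \<in> {a k..b k}"
  shows "pull_back f m y k \<in> {a k..b k}"
  using interval_chain_funpow_image[OF assms(1), of "m - k" k] assms(2)[of "max k m"]
  by (auto simp: pull_back_def max_def)

lemma pull_back_fixed:
  assumes "\<And>k. k < m \<Longrightarrow> f (y (Suc k)) = y k"
  shows "pull_back f m y = y"
proof
  fix k
  show "pull_back f m y k = y k"
    using backward_orbit_eq_funpow[of m f y k] assms by (cases "k \<le> m") (auto simp: pull_back_def max_def)
qed

lemma pull_back_image_chain_box:
  assumes chain: "interval_chain f a b"
  shows "pull_back f m ` PiE UNIV (\<lambda>k. {a k..b k}) =
    {y \<in> PiE UNIV (\<lambda>k. {a k..b k}). \<forall>k<m. f (y (Suc k)) = y k}" (is "_ ` ?P = ?K")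
proof
  show "pull_back f m ` ?P \<subseteq> ?K"
  proof
    fix x assume "x \<in> pull_back f m ` ?P"
    then obtain y where y: "y \<in> ?P" "x = pull_back f m y"
      by blast
    then have "x \<in> ?P"
      using pull_back_in_chain[OF chain] by (simp add: PiE_iff)
    moreover have "\<forall>k<m. f (x (Suc k)) = x k"
      using pull_back_step y(2) by simp
    ultimately show "x \<in> ?K"
      by simp
  qed
  show "?K \<subseteq> pull_back f m ` ?P"
  proof
    fix y assume y: "y \<in> ?K"
    then have "y = pull_back f m y"
      using pull_back_fixed[of m f y] by simp
    with y show "y \<in> pull_back f m ` ?P"
      by blast
  qed
qed

lemma continuous_on_pull_back:
  assumes cont: "continuous_on {0..1} f" and into: "f ` {0..1} \<subseteq> {0..1}"
  shows "continuous_on (PiE UNIV (\<lambda>_. {0..1})) (pull_back f m)"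
proof (rule continuous_on_coordinatewise_then_product)
  fix k
  have "continuous_on (PiE UNIV (\<lambda>_. {0..1})) (\<lambda>y. y (max k m))"
    by (rule continuous_on_subset[OF continuous_on_product_coordinates]) simp
  moreover have "(\<lambda>y. y (max k m)) ` PiE UNIV (\<lambda>_. {0..1}) \<subseteq> {0..1}"
    by (auto simp: PiE_iff)
  ultimately show "continuous_on (PiE UNIV (\<lambda>_. {0..1})) (\<lambda>y. pull_back f m y k)"
    unfolding pull_back_def
    using continuous_on_compose2[OF continuous_on_funpow[OF cont into]] by blast
qed

lemma chain_inv_lim_through:
  assumes chain: "interval_chain f a b" and p: "p \<in> {a m..b m}"
  obtains x where "x \<in> chain_inv_lim f a b" "x m = p"
proof -
  have "\<exists>z. \<forall>j. (z j \<in> {a (m + j)..b (m + j)} \<and> (j = 0 \<longrightarrow> z j = p)) \<and> f (z (Suc j)) = z j"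
  proof (rule dependent_nat_choice)
    fix q j
    assume "q \<in> {a (m + j)..b (m + j)} \<and> (j = 0 \<longrightarrow> q = p)"
    then have "q \<in> f ` {a (Suc (m + j))..b (Suc (m + j))}"
      using interval_chain_image[OF chain] by simp
    then show "\<exists>q'. (q' \<in> {a (m + Suc j)..b (m + Suc j)} \<and> (Suc j = 0 \<longrightarrow> q' = p)) \<and> f q' = q"
      by auto
  qed (use p in auto)
  then obtain z where z: "\<And>j. z j \<in> {a (m + j)..b (m + j)}" "z 0 = p" "\<And>j. f (z (Suc j)) = z j"
    by blast
  define y where "y k = (if m \<le> k then z (k - m) else a k)" for k
  have y_in: "y k \<in> {a k..b k}" for k
    using z(1)[of "k - m"] interval_chain_bounds[OF chain, of k] by (auto simp: y_def)
  then have "pull_back f m y \<in> chain_inv_lim f a b"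
    unfolding chain_inv_lim_def
  proof (intro CollectI allI conjI)
    fix k
    show "pull_back f m y k \<in> {a k..b k}"
      using pull_back_in_chain[OF chain y_in] .
    show "f (pull_back f m y (Suc k)) = pull_back f m y k"
    proof (cases "k < m")
      case False
      then have "Suc k - m = Suc (k - m)"
        by simp
      then show ?thesis
        using False z(3)[of "k - m"] by (simp add: pull_back_eq y_def)
    qed (rule pull_back_step)
  qed
  moreover have "pull_back f m y m = p"
    by (simp add: pull_back_eq y_def z(2))
  ultimately show thesis
    using that by blast
qed

lemma chain_inv_lim_subset_inv_lim:
  "interval_chain f a b \<Longrightarrow> chain_inv_lim f a b \<subseteq> inv_lim f"
  unfolding interval_chain_def chain_inv_lim_def inv_lim_def by (auto intro: order_trans)

lemma nondegenerate_chain_inv_lim: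
  assumes "interval_chain f a b" and "a m < b m"
  shows "nondegenerate (chain_inv_lim f a b)"
proof -
  obtain x where "x \<in> chain_inv_lim f a b" "x m = a m"
    using chain_inv_lim_through[OF assms(1), of "a m" m] assms(2) by auto
  moreover obtain y where "y \<in> chain_inv_lim f a b" "y m = b m"
    using chain_inv_lim_through[OF assms(1), of "b m" m] assms(2) by auto
  ultimately show ?thesis
    unfolding nondegenerate_def using assms(2) by force
qed

lemma not_subset_chain_inv_lim:
  assumes "interval_chain f a b" and "\<not> {a m..b m} \<subseteq> {l m..r m}"
  shows "\<not> chain_inv_lim f a b \<subseteq> chain_inv_lim f l r"
proof -
  obtain p where "p \<in> {a m..b m}" "p \<notin> {l m..r m}"
    using assms(2) by blast
  moreover obtain x where "x \<in> chain_inv_lim f a b" "x m = p"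
    using chain_inv_lim_through[OF assms(1) \<open>p \<in> {a m..b m}\<close>] .
  ultimately show ?thesis
    by (auto simp: chain_inv_lim_def)
qed

lemma chain_inv_lim_prefix:
  assumes chain: "interval_chain f a' b'" and agree: "\<And>k. k \<le> m \<Longrightarrow> a k = a' k \<and> b k = b' k"
    and x: "x \<in> chain_inv_lim f a b"
  obtains y where "y \<in> chain_inv_lim f a' b'" "\<And>k. k \<le> m \<Longrightarrow> y k = x k"
proof -
  have "x m \<in> {a m..b m}"
    using x by (simp add: chain_inv_lim_def)
  then have "x m \<in> f ` {a' (Suc m)..b' (Suc m)}"
    using agree[of m] chain by (simp add: interval_chain_def)
  then obtain q where q: "q \<in> {a' (Suc m)..b' (Suc m)}" "f q = x m"
    by (metis imageE)
  obtain y where y: "y \<in> chain_inv_lim f a' b'" "y (Suc m) = q"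
    using chain_inv_lim_through[OF chain q(1)] .
  have "y m = x m"
    using y q(2) by (auto simp: chain_inv_lim_def)
  moreover have orbit: "z k = (f ^^ (m - k)) (z m)" if "z \<in> chain_inv_lim f c d" "k \<le> m" for z c d k
    using backward_orbit_eq_funpow[of m f z k] that by (simp add: chain_inv_lim_def)
  ultimately have "y k = x k" if "k \<le> m" for k
    using orbit[OF x that] orbit[OF y(1) that] by simp
  with y(1) show thesis
    using that by blast
qed

lemma continuum_chain_inv_lim:
  assumes cont: "continuous_on {0..1} f" and into: "f ` {0..1} \<subseteq> {0..1}"
    and chain: "interval_chain f a b"
  shows "continuum (chain_inv_lim f a b)"
proof -
  define P where "P = PiE UNIV (\<lambda>k. {a k..b k})"
  define K where "K m = {y \<in> P. \<forall>k<m. f (y (Suc k)) = y k}" for m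
  have "continuous_on P (pull_back f m)" for m
    using continuous_on_pull_back[OF cont into] continuous_on_subset chain_box_subset_unit_box[OF chain]
    unfolding P_def by blast
  moreover have "compact P" "connected P"
    by (simp_all add: P_def compact_PiE_UNIV connected_PiE_UNIV)
  moreover have "K m = pull_back f m ` P" for m
    unfolding K_def P_def by (rule pull_back_image_chain_box[OF chain, symmetric])
  ultimately have K: "compact (K m)" "connected (K m)" for m
    by (auto intro: compact_continuous_image connected_continuous_image)
  have "decseq K"
    by (rule decseq_SucI) (auto simp: K_def)
  have Inter: "chain_inv_lim f a b = \<Inter>(range K)"
    by (auto simp: K_def P_def PiE_iff chain_inv_lim_def)
  have "closed (\<Inter>(range K))"
    using K(1) compact_imp_closed by blast
  then have "compact (K 0 \<inter> \<Inter>(range K))"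
    using compact_Int_closed K(1) by blast
  then have "compact (\<Inter>(range K))"
    by (simp add: Int_absorb1 INF_lower)
  moreover have "chain_inv_lim f a b \<noteq> {}"
    using chain_inv_lim_through[OF chain, of "a 0" 0] interval_chain_bounds[OF chain] by auto
  ultimately show ?thesis
    using connected_nest_metric[OF K \<open>decseq K\<close>] by (simp add: continuum_def Inter)
qed

lemma interval_chain_from:
  fixes f :: "real \<Rightarrow> real"
  assumes cont: "continuous_on {0..1} f" and onto: "f ` {0..1} = {0..1}"
    and "0 \<le> c" "c \<le> d" "d \<le> 1"
  obtains a b where "interval_chain f a b" "a 0 = c" "b 0 = d"
proof -
  let ?P = "\<lambda>(n :: nat) (p :: real \<times> real). 0 \<le> fst p \<and> fst p \<le> snd p \<and> snd p \<le> 1 \<and> (n = 0 \<longrightarrow> p = (c, d))"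
  have "\<exists>z. \<forall>n. ?P n (z n) \<and> f ` {fst (z (Suc n))..snd (z (Suc n))} = {fst (z n)..snd (z n)}"
  proof (rule dependent_nat_choice)
    show "\<exists>p. ?P 0 p"
      using assms(3-5) by auto
    fix p n
    assume p: "?P n p"
    then have "fst p \<in> f ` {0..1}" "snd p \<in> f ` {0..1}" "fst p \<le> snd p"
      using onto by auto
    then obtain c' d' where "0 \<le> c'" "c' \<le> d'" "d' \<le> 1" "f ` {c'..d'} = {fst p..snd p}"
      by (rule interval_image_lift[OF cont])
    then show "\<exists>q. ?P (Suc n) q \<and> f ` {fst q..snd q} = {fst p..snd p}"
      by (intro exI[of _ "(c', d')"]) simp
  qed
  then obtain z where z: "\<And>n. ?P n (z n)"
    "\<And>n. f ` {fst (z (Suc n))..snd (z (Suc n))} = {fst (z n)..snd (z n)}"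
    by blast
  show thesis
  proof (rule that)
    show "interval_chain f (\<lambda>n. fst (z n)) (\<lambda>n. snd (z n))"
      using z by (simp add: interval_chain_def)
    show "fst (z 0) = c" "snd (z 0) = d"
      using z(1)[of 0] by auto
  qed
qed

lemma interval_chain_splice:
  assumes head: "interval_chain f l r" and tail: "interval_chain f a b"
    and joint: "f ` {a 0..b 0} = {l m..r m}"
  shows "interval_chain f (\<lambda>k. if k \<le> m then l k else a (k - Suc m))
                          (\<lambda>k. if k \<le> m then r k else b (k - Suc m))"
  unfolding interval_chain_def
proof
  fix k
  consider "k < m" | "k = m" | "m < k"
    by linarith
  then show "0 \<le> (if k \<le> m then l k else a (k - Suc m)) \<and>
    (if k \<le> m then l k else a (k - Suc m)) \<le> (if k \<le> m then r k else b (k - Suc m)) \<and>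
    (if k \<le> m then r k else b (k - Suc m)) \<le> 1 \<and>
    f ` {if Suc k \<le> m then l (Suc k) else a (Suc k - Suc m)..
         if Suc k \<le> m then r (Suc k) else b (Suc k - Suc m)} =
    {if k \<le> m then l k else a (k - Suc m)..if k \<le> m then r k else b (k - Suc m)}"
  proof cases
    case 1
    then show ?thesis
      using interval_chain_bounds[OF head, of k] interval_chain_image[OF head, of k] by simp
  next
    case 2
    then show ?thesis
      using interval_chain_bounds[OF head, of k] joint by simp
  next
    case 3
    then have "Suc k - Suc m = Suc (k - Suc m)"
      by simp
    then show ?thesis
      using 3 interval_chain_bounds[OF tail, of "k - Suc m"]
        interval_chain_image[OF tail, of "k - Suc m"] by simp
  qed
qed

lemma interval_chain_extend_prefix:
  fixes f :: "real \<Rightarrow> real"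
  assumes cont: "continuous_on {0..1} f" and onto: "f ` {0..1} = {0..1}"
    and chain: "interval_chain f l r"
    and "0 \<le> s" "s \<le> t" "t \<le> 1" and joint: "f ` {s..t} = {l m..r m}"
  shows "\<exists>a b. interval_chain f a b \<and> (\<forall>k\<le>m. a k = l k \<and> b k = r k) \<and> a (Suc m) = s \<and> b (Suc m) = t"
proof -
  obtain a' b' where tail: "interval_chain f a' b'" "a' 0 = s" "b' 0 = t"
    using interval_chain_from[OF cont onto \<open>0 \<le> s\<close> \<open>s \<le> t\<close> \<open>t \<le> 1\<close>] by blast
  define a where "a k = (if k \<le> m then l k else a' (k - Suc m))" for k
  define b where "b k = (if k \<le> m then r k else b' (k - Suc m))" for k
  have "interval_chain f a b"
    unfolding a_def b_def using interval_chain_splice[OF chain tail(1)] joint tail(2,3) by simp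
  moreover have "\<forall>k\<le>m. a k = l k \<and> b k = r k" "a (Suc m) = s" "b (Suc m) = t"
    using tail(2,3) by (simp_all add: a_def b_def)
  ultimately show ?thesis
    by blast
qed

lemma infinite_nat_set_Suc_above:
  assumes "infinite (N :: nat set)"
  shows "\<exists>m. \<forall>j. j \<le> m j \<and> Suc (m j) \<in> N"
proof -
  have "\<forall>j. \<exists>i. j \<le> i \<and> Suc i \<in> N"
  proof
    fix j
    obtain n where "n \<in> N" "j < n"
      using assms by (meson infinite_nat_iff_unbounded)
    then show "\<exists>i. j \<le> i \<and> Suc i \<in> N"
      by (intro exI[of _ "n - 1"]) auto
  qed
  then show ?thesis
    by (rule choice)
qed

lemma splitting_seq_approximating_chains:
  fixes f :: "real \<Rightarrow> real"
  assumes cont: "continuous_on {0..1} f" and onto: "f ` {0..1} = {0..1}"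
    and split: "splitting_seq f l r"
  obtains m a b where "filterlim m at_top sequentially"
    and "\<And>j. interval_chain f (a j) (b j)"
    and "\<And>j k. k \<le> m j \<Longrightarrow> a j k = l k \<and> b j k = r k"
    and "\<And>j. a j (Suc (m j)) < b j (Suc (m j))"
    and "\<And>j. \<not> {a j (Suc (m j))..b j (Suc (m j))} \<subseteq> {l (Suc (m j))..r (Suc (m j))}"
proof -
  have chain: "interval_chain f l r"
    using split by (simp add: splitting_seq_def tight_seq_def interval_chain_def)
  obtain N s t where "infinite N" and st: "\<forall>n\<in>N. 0 \<le> s n \<and> s n < t n \<and> t n \<le> 1 \<and>
      {s n..t n} \<inter> {l n..r n} \<subseteq> {l n, r n} \<and> f ` {s n..t n} = f ` {l n..r n}"
    using split unfolding splitting_seq_def by blast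
  obtain m where m: "\<forall>j. j \<le> m j \<and> Suc (m j) \<in> N"
    using infinite_nat_set_Suc_above[OF \<open>infinite N\<close>] by blast
  have "\<forall>j. \<exists>a b. interval_chain f a b \<and> (\<forall>k\<le>m j. a k = l k \<and> b k = r k) \<and>
    a (Suc (m j)) = s (Suc (m j)) \<and> b (Suc (m j)) = t (Suc (m j))"
  proof
    fix j
    have "Suc (m j) \<in> N"
      using m by blast
    then have "0 \<le> s (Suc (m j))" "s (Suc (m j)) \<le> t (Suc (m j))" "t (Suc (m j)) \<le> 1"
      "f ` {s (Suc (m j))..t (Suc (m j))} = {l (m j)..r (m j)}"
      using st interval_chain_image[OF chain, of "m j"] by auto
    then show "\<exists>a b. interval_chain f a b \<and> (\<forall>k\<le>m j. a k = l k \<and> b k = r k) \<and>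
      a (Suc (m j)) = s (Suc (m j)) \<and> b (Suc (m j)) = t (Suc (m j))"
      by (rule interval_chain_extend_prefix[OF cont onto chain])
  qed
  then obtain a b where chains: "\<And>j. interval_chain f (a j) (b j)"
    and prefix: "\<And>j k. k \<le> m j \<Longrightarrow> a j k = l k \<and> b j k = r k"
    and start: "\<And>j. a j (Suc (m j)) = s (Suc (m j))" "\<And>j. b j (Suc (m j)) = t (Suc (m j))"
    by metis
  show thesis
  proof (rule that[OF _ chains prefix])
    show "filterlim m at_top sequentially"
      using m by (intro filterlim_at_top_mono[OF filterlim_ident] always_eventually) simp
    fix j
    let ?n = "Suc (m j)"
    have "s ?n < t ?n" "{s ?n..t ?n} \<inter> {l ?n..r ?n} \<subseteq> {l ?n, r ?n}"
      using st m by blast+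
    then have "\<not> {s ?n..t ?n} \<subseteq> {l ?n..r ?n}"
      by (rule Icc_not_subset_if_meets_at_endpoints)
    with \<open>s ?n < t ?n\<close> show "a j ?n < b j ?n" and "\<not> {a j ?n..b j ?n} \<subseteq> {l ?n..r ?n}"
      using start by simp_all
  qed
qed

lemma hausdist_chain_inv_lim_tendsto_0:
  assumes cont: "continuous_on {0..1} f" and into: "f ` {0..1} \<subseteq> {0..1}"
    and chain: "interval_chain f l r" and chains: "\<And>j. interval_chain f (a j) (b j)"
    and agree: "\<And>j k. k \<le> m j \<Longrightarrow> a j k = l k \<and> b j k = r k"
    and m: "filterlim m at_top sequentially"
  shows "(\<lambda>j. hausdist (chain_inv_lim f (a j) (b j)) (chain_inv_lim f l r)) \<longlonglongrightarrow> 0"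
proof (rule hausdist_tendsto_0_if_prefixes_agree[OF _ _ _ _ m])
  show "chain_inv_lim f l r \<noteq> {}" "bounded (chain_inv_lim f l r)"
    "chain_inv_lim f (a j) (b j) \<noteq> {}" "bounded (chain_inv_lim f (a j) (b j))" for j
    using continuum_chain_inv_lim[OF cont into chain] continuum_chain_inv_lim[OF cont into chains]
    by (auto simp: continuum_def compact_imp_bounded)
  show "\<exists>y\<in>chain_inv_lim f l r. \<forall>k\<le>m j. y k = x k" if "x \<in> chain_inv_lim f (a j) (b j)" for j x
    using chain_inv_lim_prefix[of f l r "m j" "a j" "b j" x, OF chain agree that] by blast
  show "\<exists>x\<in>chain_inv_lim f (a j) (b j). \<forall>k\<le>m j. x k = y k" if "y \<in> chain_inv_lim f l r" for j y
    using chain_inv_lim_prefix[of f "a j" "b j" "m j" l r y, OF chains _ that] agree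
    by (metis (no_types, lifting))
qed

theorem lemma4p6:
  fixes f :: "real \<Rightarrow> real"
  assumes "continuous_on {0..1} f"
    and "f ` {0..1} = {0..1}"
    and "admits_splitting f"
  shows "\<exists>(C :: (nat \<Rightarrow> real) set) (Cs :: nat \<Rightarrow> (nat \<Rightarrow> real) set).
           continuum C \<and> nondegenerate C \<and> C \<subseteq> inv_lim f \<and>
           (\<forall>n. continuum (Cs n) \<and> nondegenerate (Cs n) \<and> Cs n \<subseteq> inv_lim f \<and> Cs n \<noteq> C) \<and>
           (\<lambda>n. hausdist (Cs n) C) \<longlonglongrightarrow> 0"
proof -
  obtain l r where split: "splitting_seq f l r"
    using assms(3) by (auto simp: admits_splitting_def)
  then have chain: "interval_chain f l r" and "\<exists>n. l n < r n"
    by (auto simp: splitting_seq_def tight_seq_def interval_chain_def)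
  obtain m a b where m: "filterlim m at_top sequentially"
    and chains: "\<And>j. interval_chain f (a j) (b j)"
    and agree: "\<And>j k. k \<le> m j \<Longrightarrow> a j k = l k \<and> b j k = r k"
    and nondeg: "\<And>j. a j (Suc (m j)) < b j (Suc (m j))"
    and escape: "\<And>j. \<not> {a j (Suc (m j))..b j (Suc (m j))} \<subseteq> {l (Suc (m j))..r (Suc (m j))}"
    using splitting_seq_approximating_chains[OF assms(1,2) split] by blast
  have into: "f ` {0..1} \<subseteq> {0..1}"
    using assms(2) by simp
  show ?thesis
  proof (intro exI[of _ "chain_inv_lim f l r"] exI[of _ "\<lambda>j. chain_inv_lim f (a j) (b j)"] conjI allI)
    show "nondegenerate (chain_inv_lim f l r)"
      using nondegenerate_chain_inv_lim[OF chain] \<open>\<exists>n. l n < r n\<close> by blast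
    show "chain_inv_lim f (a j) (b j) \<noteq> chain_inv_lim f l r" for j
      using not_subset_chain_inv_lim[of f "a j" "b j" "Suc (m j)" l r, OF chains escape] by blast
    show "(\<lambda>j. hausdist (chain_inv_lim f (a j) (b j)) (chain_inv_lim f l r)) \<longlonglongrightarrow> 0"
      by (rule hausdist_chain_inv_lim_tendsto_0[OF assms(1) into chain chains agree m])
  qed (use continuum_chain_inv_lim[OF assms(1) into] chain_inv_lim_subset_inv_lim
         nondegenerate_chain_inv_lim[OF chains nondeg] chain chains in auto)
qed

end
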